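(* Let $G\le\mathcal{S}_n$ and $a\in\mathcal{T}_n\setminus\mathcal{S}_n$, where the kernel of $a$ has type $\lambda$, and suppose $(a,G)$ is an $\mathcal{S}_n$-pair. Then (1) $G$ is $\operatorname{rank}(a)$-homogeneous; and (2) $G$ is $\lambda$-homogeneous.
   Context: $\Omega=\{1,\ldots,n\}$, $\mathcal{T}_n$ is the monoid of all maps $\Omega\to\Omega$, $\mathcal{S}_n$ the symmetric group. $\operatorname{rank}(a)=|\Omega a|$; the kernel of $a$ is the partition of $\Omega$ into the classes of $\{(x,y):xa=ya\}$, and its type is the non-increasing list of class sizes. $(a,G)$ is an $\mathcal{S}_n$-pair if $\langle a,G\rangle\setminus G=\langle a,\mathcal{S}_n\rangle\setminus\mathcal{S}_n$. $G$ is $k$-homogeneous if transitive on $k$-subsets of $\Omega$. For a partition $\lambda$ of $n$, $G$ is $\lambda$-homogeneous if for any two ordered partitions $(A_1,A_2,\ldots)$, $(B_1,B_2,\ldots)$ of $\Omega$ with $|A_i|=|B_i|=\lambda_i$ there is $g\in G$ mapping the set of parts $\{A_1,A_2,\ldots\}$ onto $\{B_1,B_2,\ldots\}$. *)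

theory Defs
  imports Main "HOL-Library.Multiset"
begin

text \<open>The ground set Omega is modelled by a finite type 'a (so n = CARD('a)).
  T_n is the set of all maps 'a => 'a, S_n the set of bijections.\<close>

definition sym_grp :: "('a \<Rightarrow> 'a) set" where
  "sym_grp = {f. bij f}"

definition perm_subgroup :: "('a \<Rightarrow> 'a) set \<Rightarrow> bool" where
  "perm_subgroup G \<longleftrightarrow> G \<subseteq> sym_grp \<and> id \<in> G \<and>
     (\<forall>f\<in>G. \<forall>g\<in>G. f \<circ> g \<in> G) \<and> (\<forall>f\<in>G. inv f \<in> G)"

inductive_set gen_monoid :: "('a \<Rightarrow> 'a) set \<Rightarrow> ('a \<Rightarrow> 'a) set" for X where
  gen_id: "id \<in> gen_monoid X"
| gen_base: "f \<in> X \<Longrightarrow> f \<in> gen_monoid X"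
| gen_comp: "f \<in> gen_monoid X \<Longrightarrow> g \<in> gen_monoid X \<Longrightarrow> f \<circ> g \<in> gen_monoid X"

definition Sn_pair :: "('a \<Rightarrow> 'a) \<Rightarrow> ('a \<Rightarrow> 'a) set \<Rightarrow> bool" where
  "Sn_pair a G \<longleftrightarrow> gen_monoid (insert a G) - G = gen_monoid (insert a sym_grp) - sym_grp"

definition rank :: "('a \<Rightarrow> 'a) \<Rightarrow> nat" where
  "rank a = card (range a)"

definition kernel_classes :: "('a \<Rightarrow> 'a) \<Rightarrow> 'a set set" where
  "kernel_classes a = {{x. a x = a y} | y. True}"

definition kernel_type :: "('a \<Rightarrow> 'a) \<Rightarrow> nat list" where
  "kernel_type a = rev (sorted_list_of_multiset (image_mset card (mset_set (kernel_classes a))))"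

definition k_homogeneous :: "('a \<Rightarrow> 'a) set \<Rightarrow> nat \<Rightarrow> bool" where
  "k_homogeneous G k \<longleftrightarrow>
     (\<forall>A B :: 'a set. card A = k \<and> card B = k \<longrightarrow> (\<exists>g\<in>G. g ` A = B))"

definition ordered_partition :: "nat list \<Rightarrow> 'a set list \<Rightarrow> bool" where
  "ordered_partition lam As \<longleftrightarrow> length As = length lam \<and>
     (\<forall>i<length As. card (As ! i) = lam ! i) \<and>
     (\<forall>i<length As. \<forall>j<length As. i \<noteq> j \<longrightarrow> As ! i \<inter> As ! j = {}) \<and>
     \<Union> (set As) = UNIV"

definition lam_homogeneous :: "('a \<Rightarrow> 'a) set \<Rightarrow> nat list \<Rightarrow> bool" where
  "lam_homogeneous G lam \<longleftrightarrow>
     (\<forall>As Bs :: 'a set list. ordered_partition lam As \<and> ordered_partition lam Bs \<longrightarrow>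
        (\<exists>g\<in>G. (\<lambda>A. g ` A) ` set As = set Bs))"

end

theory Submission
  imports Defs "HOL-Combinatorics.Permutations"
begin

text \<open>For a permutation \<open>s\<close>, the maps \<open>s \<circ> a\<close> and \<open>a \<circ> inv s\<close> lie in
  \<open>\<langle>a, S\<^sub>n\<rangle> - S\<^sub>n\<close>, hence in \<open>\<langle>a, G\<rangle> - G\<close>, and every element of \<open>\<langle>a, G\<rangle>\<close> outside \<open>G\<close>
  factors both as \<open>g \<circ> a \<circ> v\<close> and as \<open>v \<circ> a \<circ> g\<close> with \<open>g \<in> G\<close>.
  From \<open>s \<circ> a = g \<circ> a \<circ> v\<close>, the set \<open>s ` range a\<close> lies in \<open>g ` range a\<close> and has the same
  size, so the two are equal. From \<open>a \<circ> inv s = v \<circ> (a \<circ> g)\<close>, the kernel of \<open>a \<circ> g\<close>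
  refines that of \<open>a \<circ> inv s\<close>; both have \<open>rank a\<close> classes, so they coincide, i.e. \<open>s\<close> and
  \<open>inv g\<close> move the kernel of \<open>a\<close> to the same partition. So the \<open>G\<close>-orbits of the image
  and of the kernel of \<open>a\<close> are their full \<open>S\<^sub>n\<close>-orbits, which consist of all sets of size
  \<open>rank a\<close> and all partitions of the kernel type of \<open>a\<close>.\<close>

lemma gen_monoid_insert_factor_left:
  assumes "f \<in> gen_monoid (insert a M)" and "id \<in> M" and "\<forall>g\<in>M. \<forall>h\<in>M. g \<circ> h \<in> M"
  shows "f \<in> M \<or> (\<exists>g\<in>M. \<exists>v. f = g \<circ> a \<circ> v)"
  using assms(1)
proof (induction rule: gen_monoid.induct)
  case (gen_comp f h)
  then show ?case
    using assms(3) by (metis comp_assoc id_comp)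
qed (use assms in \<open>force+\<close>)

lemma gen_monoid_insert_factor_right:
  assumes "f \<in> gen_monoid (insert a M)" and "id \<in> M" and "\<forall>g\<in>M. \<forall>h\<in>M. g \<circ> h \<in> M"
  shows "f \<in> M \<or> (\<exists>g\<in>M. \<exists>v. f = v \<circ> a \<circ> g)"
  using assms(1)
proof (induction rule: gen_monoid.induct)
  case (gen_comp f h)
  then show ?case
    using assms(3) by (metis comp_assoc comp_id)
qed (use assms in \<open>force+\<close>)

lemma perm_subgroup_bij: "perm_subgroup G \<Longrightarrow> g \<in> G \<Longrightarrow> bij g"
  by (auto simp: perm_subgroup_def sym_grp_def)

lemma Sn_pair_nonbij_factors:
  assumes G: "perm_subgroup G" and "Sn_pair a G"
    and w: "w \<in> gen_monoid (insert a sym_grp)" "\<not> bij w"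
  shows "\<exists>g\<in>G. \<exists>v. w = g \<circ> a \<circ> v" and "\<exists>g\<in>G. \<exists>v. w = v \<circ> a \<circ> g"
proof -
  have "w \<in> gen_monoid (insert a G) - G"
    using assms unfolding Sn_pair_def by (simp add: sym_grp_def)
  moreover have "id \<in> G" "\<forall>g\<in>G. \<forall>h\<in>G. g \<circ> h \<in> G"
    using G by (auto simp: perm_subgroup_def)
  ultimately show "\<exists>g\<in>G. \<exists>v. w = g \<circ> a \<circ> v" "\<exists>g\<in>G. \<exists>v. w = v \<circ> a \<circ> g"
    using gen_monoid_insert_factor_left gen_monoid_insert_factor_right by blast+
qed

lemma comp_bij_mem_gen_monoid:
  assumes "bij s"
  shows "s \<circ> a \<in> gen_monoid (insert a sym_grp)" and "a \<circ> s \<in> gen_monoid (insert a sym_grp)"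
  using assms by (auto intro: gen_monoid.gen_comp[OF gen_monoid.gen_base gen_monoid.gen_base]
      simp: sym_grp_def)

lemma bij_comp_bij_iff:
  assumes "bij s"
  shows "bij (s \<circ> a) \<longleftrightarrow> bij a" and "bij (a \<circ> s) \<longleftrightarrow> bij a"
proof -
  have "a = inv s \<circ> (s \<circ> a)" "a = (a \<circ> s) \<circ> inv s"
    using assms by (simp_all add: fun_eq_iff bij_inv_eq_iff bij_is_surj surj_f_inv_f)
  then show "bij (s \<circ> a) \<longleftrightarrow> bij a" "bij (a \<circ> s) \<longleftrightarrow> bij a"
    using assms by (metis bij_comp bij_imp_bij_inv)+
qed

lemma image_range_eq_if_comp_factor:
  assumes "inj s" "inj g" "finite (range a)" "s \<circ> a = g \<circ> a \<circ> v"
  shows "s ` range a = g ` range a"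
proof (rule card_subset_eq)
  have "s ` range a = range (g \<circ> a \<circ> v)"
    by (metis assms(4) image_comp)
  then show "s ` range a \<subseteq> g ` range a"
    by auto
  show "card (s ` range a) = card (g ` range a)"
    using assms(1,2) by (simp add: card_image inj_on_subset)
qed (use assms in simp)

lemma comp_factor_same_fibres:
  assumes "f = v \<circ> h" "finite (range h)" "card (range f) = card (range h)"
  shows "f x = f y \<longleftrightarrow> h x = h y"
proof -
  have "range f = v ` range h"
    using assms(1) by (simp add: image_comp)
  then have "inj_on v (range h)"
    using assms(2,3) by (simp add: inj_on_iff_eq_card)
  then show ?thesis
    using assms(1) by (auto dest: inj_onD)
qed

lemma rank_comp_bij: "bij p \<Longrightarrow> rank (a \<circ> p) = rank a"
  unfolding rank_def image_comp[symmetric] by (simp add: bij_is_surj)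

lemma kernel_classes_comp_bij:
  assumes "bij p"
  shows "kernel_classes (a \<circ> p) = image (inv p) ` kernel_classes a"
proof -
  have "kernel_classes (a \<circ> p) = (\<lambda>y. inv p ` {x. a x = a y}) ` range p"
    using assms by (auto simp: kernel_classes_def bij_image_Collect_eq bij_imp_bij_inv inv_inv_eq)
  also have "\<dots> = image (inv p) ` kernel_classes a"
    using assms by (auto simp: kernel_classes_def bij_is_surj)
  finally show ?thesis .
qed

lemma kernel_classes_cong:
  "(\<And>x y. f x = f y \<longleftrightarrow> h x = h y) \<Longrightarrow> kernel_classes f = kernel_classes h"
  by (simp add: kernel_classes_def)

lemma Sn_pair_range_orbit:
  fixes a :: "'a::finite \<Rightarrow> 'a"
  assumes G: "perm_subgroup G" and "\<not> bij a" "Sn_pair a G" "bij s"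
  shows "\<exists>g\<in>G. g ` range a = s ` range a"
proof -
  have "\<not> bij (s \<circ> a)"
    using assms bij_comp_bij_iff by blast
  then obtain g v where g: "g \<in> G" and factor: "s \<circ> a = g \<circ> a \<circ> v"
    using Sn_pair_nonbij_factors(1)[OF G \<open>Sn_pair a G\<close> comp_bij_mem_gen_monoid(1)] \<open>bij s\<close>
    by blast
  have "s ` range a = g ` range a"
    using \<open>bij s\<close> perm_subgroup_bij[OF G g] factor
    by (intro image_range_eq_if_comp_factor) (simp_all add: bij_is_inj)
  with g show ?thesis
    by metis
qed

lemma Sn_pair_kernel_orbit:
  fixes a :: "'a::finite \<Rightarrow> 'a"
  assumes G: "perm_subgroup G" and "\<not> bij a" "Sn_pair a G" "bij s"
  shows "\<exists>g\<in>G. image g ` kernel_classes a = image s ` kernel_classes a"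
proof -
  have inv_s: "bij (inv s)"
    using \<open>bij s\<close> by (rule bij_imp_bij_inv)
  then have "\<not> bij (a \<circ> inv s)"
    using assms bij_comp_bij_iff by blast
  then obtain g v where g: "g \<in> G" and factor: "a \<circ> inv s = v \<circ> (a \<circ> g)"
    using Sn_pair_nonbij_factors(2)[OF G \<open>Sn_pair a G\<close> comp_bij_mem_gen_monoid(2)[OF inv_s]]
    by (metis comp_assoc)
  have bij_g: "bij g"
    using G g by (rule perm_subgroup_bij)
  have "kernel_classes (a \<circ> inv s) = kernel_classes (a \<circ> g)"
    using comp_factor_same_fibres[OF factor] rank_comp_bij[OF inv_s] rank_comp_bij[OF bij_g]
    by (intro kernel_classes_cong) (simp add: rank_def)
  then have "image s ` kernel_classes a = image (inv g) ` kernel_classes a"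
    using inv_s bij_g \<open>bij s\<close> by (simp add: kernel_classes_comp_bij inv_inv_eq)
  moreover have "inv g \<in> G"
    using G g by (simp add: perm_subgroup_def)
  ultimately show ?thesis
    by metis
qed

lemma exists_bij_if_fibre_cards_eq:
  fixes f h :: "'a::finite \<Rightarrow> 'b"
  assumes "\<And>i. card (f -` {i}) = card (h -` {i})"
  obtains p where "bij p" and "f = h \<circ> p"
proof -
  have "image_mset f (mset_set UNIV) = image_mset h (mset_set UNIV)"
    using assms by (intro multiset_eqI) (simp add: count_image_mset_eq_card_vimage vimage_def)
  then obtain p where "p permutes UNIV" "\<forall>x\<in>UNIV. f x = h (p x)"
    by (rule image_mset_eq_implies_permutes[OF finite_UNIV])
  then show ?thesis
    using that permutes_bij by (metis comp_apply ext UNIV_I)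
qed

lemma exists_bij_image_eq:
  fixes X Y :: "'a::finite set"
  assumes "card X = card Y"
  obtains s where "bij s" and "s ` X = Y"
proof -
  have "card (- X) = card (- Y)"
    using assms by (simp add: Compl_eq_Diff_UNIV card_Diff_subset)
  then have "card ((\<lambda>x. x \<in> X) -` {b}) = card ((\<lambda>x. x \<in> Y) -` {b})" for b
    using assms by (cases b) (simp_all add: vimage_def Collect_neg_eq)
  then obtain p where "bij p" "(\<lambda>x. x \<in> X) = (\<lambda>x. x \<in> Y) \<circ> p"
    by (rule exists_bij_if_fibre_cards_eq)
  then have "X = p -` Y"
    by (auto simp: fun_eq_iff)
  then have "p ` X = Y"
    using \<open>bij p\<close> by (simp add: bij_is_surj)
  then show ?thesis
    using that \<open>bij p\<close> by blast
qed

lemma ordered_partition_index: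
  assumes "ordered_partition lam As"
  obtains idx :: "'a \<Rightarrow> nat"
  where "\<And>x. idx x < length As" and "\<And>i. i < length As \<Longrightarrow> idx -` {i} = As ! i"
proof -
  have "\<forall>x. \<exists>i. i < length As \<and> x \<in> As ! i"
    using assms unfolding ordered_partition_def by (metis UNIV_I Union_iff in_set_conv_nth)
  then obtain idx where idx: "\<And>x. idx x < length As \<and> x \<in> As ! idx x"
    by metis
  have "idx -` {i} = As ! i" if "i < length As" for i
    using assms idx that unfolding ordered_partition_def by blast
  with idx that show ?thesis
    by blast
qed

lemma ordered_partitions_conjugate:
  fixes As Bs :: "'a::finite set list"
  assumes A: "ordered_partition lam As" and B: "ordered_partition lam Bs"
  obtains s where "bij s" and "map (image s) As = Bs"
proof -
  obtain idxA where idxA: "\<And>x. idxA x < length As" "\<And>i. i < length As \<Longrightarrow> idxA -` {i} = As ! i"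
    using ordered_partition_index[OF A] by blast
  obtain idxB where idxB: "\<And>x. idxB x < length Bs" "\<And>i. i < length Bs \<Longrightarrow> idxB -` {i} = Bs ! i"
    using ordered_partition_index[OF B] by blast
  have len: "length As = length Bs"
    using A B by (simp add: ordered_partition_def)
  have "card (idxA -` {i}) = card (idxB -` {i})" for i
  proof (cases "i < length As")
    case True
    then show ?thesis
      using A B len idxA idxB by (simp add: ordered_partition_def)
  next
    case False
    then have "idxA -` {i} = {}" "idxB -` {i} = {}"
      using idxA(1) idxB(1) len by auto
    then show ?thesis
      by simp
  qed
  then obtain p where p: "bij p" "idxA = idxB \<circ> p"
    by (rule exists_bij_if_fibre_cards_eq)
  have "p ` (As ! i) = Bs ! i" if "i < length As" for i
  proof -
    have "As ! i = p -` (idxB -` {i})"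
      using idxA(2)[OF that] p(2) by (simp add: vimage_comp)
    then show ?thesis
      using idxB(2) that len p(1) by (simp add: bij_is_surj)
  qed
  with len have "map (image p) As = Bs"
    by (simp add: list_eq_iff_nth_eq)
  with p(1) that show ?thesis
    by blast
qed

lemma kernel_classes_ordered_partition:
  fixes a :: "'a::finite \<Rightarrow> 'a"
  obtains Ks where "ordered_partition (kernel_type a) Ks" and "set Ks = kernel_classes a"
proof -
  obtain xs where xs: "set xs = kernel_classes a" "distinct xs"
    using finite_distinct_list[of "kernel_classes a"] by auto
  define Ks where "Ks = rev (sort_key card xs)"
  have "map card (sort_key card xs) = sort (map card xs)"
    by (rule properties_for_sort[symmetric]) (simp_all add: mset_map)
  then have type: "kernel_type a = map card Ks"
    unfolding kernel_type_def Ks_def xs(1)[symmetric] mset_set_set[OF xs(2)]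
    by (simp add: sorted_list_of_multiset_mset flip: mset_map rev_map)
  have set_Ks: "set Ks = kernel_classes a" and "distinct Ks"
    using xs by (simp_all add: Ks_def)
  then have "Ks ! i \<inter> Ks ! j = {}" if "i < length Ks" "j < length Ks" "i \<noteq> j" for i j
    using that nth_mem[OF that(1)] nth_mem[OF that(2)] nth_eq_iff_index_eq[of Ks i j]
    unfolding kernel_classes_def by auto
  moreover have "\<Union> (set Ks) = UNIV"
    using set_Ks unfolding kernel_classes_def by auto
  ultimately have "ordered_partition (kernel_type a) Ks"
    unfolding ordered_partition_def type by simp
  with set_Ks that show ?thesis
    by blast
qed

lemma k_homogeneous_if_Sn_orbit:
  assumes G: "perm_subgroup G" and orbit: "\<And>s. bij s \<Longrightarrow> \<exists>g\<in>G. g ` X = s ` X"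
  shows "k_homogeneous G (card (X :: 'a::finite set))"
  unfolding k_homogeneous_def
proof (intro allI impI)
  fix A B :: "'a set"
  assume "card A = card X \<and> card B = card X"
  then obtain sA sB where "bij sA" "sA ` X = A" "bij sB" "sB ` X = B"
    by (metis exists_bij_image_eq)
  then obtain gA gB where gA: "gA \<in> G" "gA ` X = A" and gB: "gB \<in> G" "gB ` X = B"
    using orbit by metis
  have "inv gA ` A = X"
    using gA(2) perm_subgroup_bij[OF G gA(1)] by (metis bij_is_inj image_inv_f_f)
  then have "(gB \<circ> inv gA) ` A = B"
    using gB(2) by (metis image_comp)
  moreover have "gB \<circ> inv gA \<in> G"
    using G gA(1) gB(1) by (simp add: perm_subgroup_def)
  ultimately show "\<exists>g\<in>G. g ` A = B"
    by blast
qed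

lemma lam_homogeneous_if_Sn_orbit:
  fixes G :: "('a::finite \<Rightarrow> 'a) set"
  assumes G: "perm_subgroup G" and Ks: "ordered_partition lam Ks"
    and orbit: "\<And>s. bij s \<Longrightarrow> \<exists>g\<in>G. image g ` set Ks = image s ` set Ks"
  shows "lam_homogeneous G lam"
  unfolding lam_homogeneous_def
proof (intro allI impI)
  fix As Bs :: "'a set list"
  assume "ordered_partition lam As \<and> ordered_partition lam Bs"
  then obtain sA sB where "bij sA" "image sA ` set Ks = set As" "bij sB" "image sB ` set Ks = set Bs"
    using ordered_partitions_conjugate[OF Ks] by (metis set_map)
  then obtain gA gB where gA: "gA \<in> G" "image gA ` set Ks = set As"
    and gB: "gB \<in> G" "image gB ` set Ks = set Bs"
    using orbit by metis
  have cancel: "(gB \<circ> inv gA) ` gA ` K = gB ` K" for K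
    using perm_subgroup_bij[OF G gA(1)] by (metis bij_is_inj image_comp image_inv_f_f)
  have "(\<lambda>A. (gB \<circ> inv gA) ` A) ` set As = set Bs"
    unfolding gA(2)[symmetric] gB(2)[symmetric] cancel[symmetric] by (rule image_image)
  moreover have "gB \<circ> inv gA \<in> G"
    using G gA(1) gB(1) by (simp add: perm_subgroup_def)
  ultimately show "\<exists>g\<in>G. (\<lambda>A. g ` A) ` set As = set Bs"
    by blast
qed

theorem lemma5p1:
  fixes G :: "('a::finite \<Rightarrow> 'a) set" and a :: "'a \<Rightarrow> 'a"
  assumes "perm_subgroup G"
    and "a \<notin> sym_grp"
    and "Sn_pair a G"
  shows "k_homogeneous G (rank a) \<and> lam_homogeneous G (kernel_type a)"
proof
  have a: "\<not> bij a"
    using assms(2) by (simp add: sym_grp_def)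
  show "k_homogeneous G (rank a)"
    unfolding rank_def using assms(1) Sn_pair_range_orbit[OF assms(1) a assms(3)]
    by (rule k_homogeneous_if_Sn_orbit)
  obtain Ks where Ks: "ordered_partition (kernel_type a) Ks" "set Ks = kernel_classes a"
    by (rule kernel_classes_ordered_partition)
  show "lam_homogeneous G (kernel_type a)"
    using Ks(1) by (rule lam_homogeneous_if_Sn_orbit[OF assms(1)])
      (simp add: Ks(2) Sn_pair_kernel_orbit[OF assms(1) a assms(3)])
qed

end
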